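(* Let $(\Omega,\mathcal{F},\mathbb{P})$ be a complete probability space, $E$ a Polish space, and $X=\{X_t\}_{t\geq0}$ an $E$-valued stochastic process, with each atomic proposition $a$ interpreted by a Borel set $B_a\subset E$. Let $\phi_1,\phi_2$ be MTL-formulas such that $\llbracket\phi_1\rrbracket$ and $\llbracket\phi_2\rrbracket$ belong to $\mathcal{F}\otimes\mathcal{B}([0,\infty))$, and let $I$ be an interval in $[0,\infty)$. Then $\{(\omega,t) : X(\omega),t\models\phi_1\mathcal{U}_I\phi_2\}\in\mathcal{F}\otimes\mathcal{B}([0,\infty))$.
   Context: MTL-formulas: $\phi::=a\mid\phi_1\wedge\phi_2\mid\lnot\phi\mid\phi_1\mathcal{U}_I\phi_2$, $I$ an interval in $[0,\infty)$ (any endpoint type, possibly unbounded). Semantics: $X(\omega),t\models a$ iff $X_t(\omega)\in B_a$; $\lnot,\wedge$ classical; $X(\omega),t\models\phi_1\mathcal{U}_I\phi_2$ iff there exists $s\in I$ with $X(\omega),t+s\models\phi_2$ and $X(\omega),s'\models\phi_1$ for all $s'\in[t,t+s)$. $\llbracket\phi\rrbracket:=\{(\omega,t)\in\Omega\times[0,\infty) : X(\omega),t\models\phi\}$. *)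

theory Defs
  imports "HOL-Probability.Probability"
begin

datatype 'ap mtl =
    Atom 'ap
  | And "'ap mtl" "'ap mtl"
  | Not "'ap mtl"
  | Until "'ap mtl" "real set" "'ap mtl"

definition time_interval :: "real set \<Rightarrow> bool" where
  "time_interval I \<longleftrightarrow> is_interval I \<and> I \<subseteq> {0..}"

primrec wf_mtl :: "'ap mtl \<Rightarrow> bool" where
  "wf_mtl (Atom a) = True"
| "wf_mtl (And p q) = (wf_mtl p \<and> wf_mtl q)"
| "wf_mtl (Not p) = wf_mtl p"
| "wf_mtl (Until p I q) = (time_interval I \<and> wf_mtl p \<and> wf_mtl q)"

text \<open>Satisfaction: X t \<omega> is X_t(\<omega>), B a is the set interpreting atom a.\<close>
primrec sat :: "(real \<Rightarrow> 'w \<Rightarrow> 'e) \<Rightarrow> ('ap \<Rightarrow> 'e set) \<Rightarrow> 'w \<Rightarrow> real \<Rightarrow> 'ap mtl \<Rightarrow> bool" where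
  "sat X B \<omega> t (Atom a) = (X t \<omega> \<in> B a)"
| "sat X B \<omega> t (And p q) = (sat X B \<omega> t p \<and> sat X B \<omega> t q)"
| "sat X B \<omega> t (Not p) = (\<not> sat X B \<omega> t p)"
| "sat X B \<omega> t (Until p I q) =
     (\<exists>s\<in>I. sat X B \<omega> (t + s) q \<and> (\<forall>s'\<in>{t..<t + s}. sat X B \<omega> s' p))"

definition denot :: "'w measure \<Rightarrow> (real \<Rightarrow> 'w \<Rightarrow> 'e) \<Rightarrow> ('ap \<Rightarrow> 'e set) \<Rightarrow> 'ap mtl \<Rightarrow> ('w \<times> real) set" where
  "denot M X B \<phi> = {(\<omega>, t). \<omega> \<in> space M \<and> 0 \<le> t \<and> sat X B \<omega> t \<phi>}"

definition prod_time :: "'w measure \<Rightarrow> ('w \<times> real) measure" where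
  "prod_time M = M \<Otimes>\<^sub>M restrict_space borel {0::real..}"

end

theory Submission
  imports Defs "HOL-Library.Nat_Bijection"
begin

text \<open>
  Let \<open>E(\<omega>, t) \<in> [t, \<infinity>]\<close> be the infimum of the times \<open>\<ge> t\<close> at which \<open>\<phi>1\<close> fails along \<open>\<omega>\<close>.
  Then \<open>\<omega>, t \<Turnstile> \<phi>1 U\<^sub>I \<phi>2\<close> iff some \<open>u \<in> t + I\<close> with \<open>u \<le> E(\<omega>, t)\<close> satisfies \<open>\<phi>2\<close>.
  Both \<open>E\<close> and the existential over \<open>u\<close> in an open window are measurable because of the
  measurable projection theorem: over a complete finite measure space, the projection to \<open>\<Omega>\<close>
  of a set in \<open>\<F> \<otimes> \<B>(\<real>)\<close> is in \<open>\<F>\<close>. Its proof writes the set as a Suslin scheme of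
  rectangles with compact vertical sides, so that the projection is again a Suslin scheme of
  measurable sets, and Suslin schemes are measurable for complete measures (measurable
  envelopes). Since an interval differs from its interior in at most two points and an open set
  is a countable union of open intervals, only windows of the form \<open>{c}\<close> and \<open>{a<..<b}\<close>
  have to be treated, the latter by rational approximation.
\<close>

section \<open>The Suslin operation\<close>

definition suslin :: "(nat list \<Rightarrow> 'a set) \<Rightarrow> 'a set" where
  "suslin C = (\<Union>\<sigma>. \<Inter>n. C (map \<sigma> [0..<Suc n]))"

lemma suslin_const [simp]: "suslin (\<lambda>_. A) = A"
  by (simp add: suslin_def)

text \<open>The first coordinate of the new branch encodes the index \<open>i\<close> together with the first
  coordinate of a branch for \<open>C i\<close>.\<close>

lemma suslin_UN:
  "(\<Union>i. suslin (C i)) = suslin (\<lambda>s. C (fst (prod_decode (hd s))) (snd (prod_decode (hd s)) # tl s))"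
  (is "_ = suslin ?D")
proof (intro equalityI subsetI)
  fix x assume "x \<in> (\<Union>i. suslin (C i))"
  then obtain i \<tau> where \<tau>: "\<And>n. x \<in> C i (map \<tau> [0..<Suc n])" by (auto simp: suslin_def)
  define \<sigma> where "\<sigma> = case_nat (prod_encode (i, \<tau> 0)) (\<lambda>k. \<tau> (Suc k))"
  have "?D (map \<sigma> [0..<Suc n]) = C i (map \<tau> [0..<Suc n])" for n
    by (simp add: \<sigma>_def map_upt_Suc del: upt_Suc)
  then show "x \<in> suslin ?D" using \<tau> by (auto simp: suslin_def)
next
  fix x assume "x \<in> suslin ?D"
  then obtain \<sigma> where \<sigma>: "\<And>n. x \<in> ?D (map \<sigma> [0..<Suc n])" by (auto simp: suslin_def)
  define \<tau> where "\<tau> = case_nat (snd (prod_decode (\<sigma> 0))) (\<lambda>k. \<sigma> (Suc k))"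
  have "?D (map \<sigma> [0..<Suc n]) = C (fst (prod_decode (\<sigma> 0))) (map \<tau> [0..<Suc n])" for n
    by (simp add: \<tau>_def map_upt_Suc del: upt_Suc)
  then show "x \<in> (\<Union>i. suslin (C i))" using \<sigma> by (auto simp: suslin_def)
qed

lemma prod_encode_mono_right: "j \<le> j' \<Longrightarrow> prod_encode (i, j) \<le> prod_encode (i, j')"
  unfolding prod_encode_def triangle_def by (simp add: div_le_mono mult_le_mono del: mult_Suc_right)

text \<open>Coordinate \<open>prod_encode (i, j)\<close> of the new branch is coordinate \<open>j\<close> of a branch for \<open>C i\<close>.\<close>

lemma suslin_INT:
  "(\<Inter>i. suslin (C i)) = suslin (\<lambda>s. case prod_decode (length s - 1) of
     (i, j) \<Rightarrow> C i (map (\<lambda>j'. s ! prod_encode (i, j')) [0..<Suc j]))"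
  (is "_ = suslin ?D")
proof -
  have D: "?D (map \<sigma> [0..<Suc (prod_encode (i, j))]) = C i (map (\<lambda>j'. \<sigma> (prod_encode (i, j'))) [0..<Suc j])"
    for \<sigma> i j
    using prod_encode_mono_right[of _ j i]
    by (auto simp: nth_map_upt less_Suc_eq_le simp del: upt_Suc intro!: arg_cong[where f="C i"])
  have branch: "(\<forall>n. x \<in> ?D (map \<sigma> [0..<Suc n])) \<longleftrightarrow>
      (\<forall>i j. x \<in> C i (map (\<lambda>j'. \<sigma> (prod_encode (i, j'))) [0..<Suc j]))" for x \<sigma>
  proof (intro iffI allI)
    fix i j assume "\<forall>n. x \<in> ?D (map \<sigma> [0..<Suc n])"
    then have "x \<in> ?D (map \<sigma> [0..<Suc (prod_encode (i, j))])" ..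
    then show "x \<in> C i (map (\<lambda>j'. \<sigma> (prod_encode (i, j'))) [0..<Suc j])" by (simp only: D)
  next
    fix n assume *: "\<forall>i j. x \<in> C i (map (\<lambda>j'. \<sigma> (prod_encode (i, j'))) [0..<Suc j])"
    obtain i j where "n = prod_encode (i, j)" by (metis prod_decode_inverse surj_pair)
    then show "x \<in> ?D (map \<sigma> [0..<Suc n])" using * by (simp only: D)
  qed
  show ?thesis
  proof (intro equalityI subsetI)
    fix x assume "x \<in> (\<Inter>i. suslin (C i))"
    then have "\<forall>i. \<exists>\<tau>. \<forall>j. x \<in> C i (map \<tau> [0..<Suc j])" by (auto simp: suslin_def)
    then obtain \<tau> where \<tau>: "\<And>i j. x \<in> C i (map (\<tau> i) [0..<Suc j])" by metis
    define \<sigma> where "\<sigma> k = \<tau> (fst (prod_decode k)) (snd (prod_decode k))" for k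
    have "(\<lambda>j'. \<sigma> (prod_encode (i, j'))) = \<tau> i" for i by (simp add: \<sigma>_def)
    then show "x \<in> suslin ?D" using \<tau> branch[of x \<sigma>] by (auto simp: suslin_def simp del: upt_Suc)
  next
    fix x assume "x \<in> suslin ?D"
    then show "x \<in> (\<Inter>i. suslin (C i))" using branch by (fastforce simp: suslin_def simp del: upt_Suc)
  qed
qed

lemma INT_INT_atLeastAtMost_Suc: "(\<Inter>n. \<Inter>k\<in>{1..Suc n}. X k) = (\<Inter>n. X (Suc n))"
proof (rule equalityI)
  show "(\<Inter>n. \<Inter>k\<in>{1..Suc n}. X k) \<subseteq> (\<Inter>n. X (Suc n))"
  proof (rule INT_greatest)
    fix n
    have "(\<Inter>n. \<Inter>k\<in>{1..Suc n}. X k) \<subseteq> (\<Inter>k\<in>{1..Suc n}. X k)" by (rule INF_lower) simp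
    also have "\<dots> \<subseteq> X (Suc n)" by (rule INF_lower) simp
    finally show "(\<Inter>n. \<Inter>k\<in>{1..Suc n}. X k) \<subseteq> X (Suc n)" .
  qed
  show "(\<Inter>n. X (Suc n)) \<subseteq> (\<Inter>n. \<Inter>k\<in>{1..Suc n}. X k)"
  proof (intro subsetI INT_I)
    fix x n k assume x: "x \<in> (\<Inter>n. X (Suc n))" and k: "k \<in> {1..Suc n}"
    then obtain m where "k = Suc m" by (cases k) auto
    with x show "x \<in> X k" by blast
  qed
qed

lemma suslin_prefix_INT: "suslin C = suslin (\<lambda>s. \<Inter>k\<in>{1..length s}. C (take k s))"
proof -
  have prefixes: "(\<Inter>k\<in>{1..length (map \<sigma> [0..<Suc n])}. C (take k (map \<sigma> [0..<Suc n]))) =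
      (\<Inter>k\<in>{1..Suc n}. C (map \<sigma> [0..<k]))" for \<sigma> :: "nat \<Rightarrow> nat" and n
    by (intro INF_cong) (simp_all add: take_map take_upt min_absorb1 del: upt_Suc)
  have "(\<Inter>n. \<Inter>k\<in>{1..Suc n}. C (map \<sigma> [0..<k])) = (\<Inter>n. C (map \<sigma> [0..<Suc n]))"
    for \<sigma> :: "nat \<Rightarrow> nat"
    by (rule INT_INT_atLeastAtMost_Suc)
  then show ?thesis unfolding suslin_def by (simp only: prefixes)
qed

section \<open>Suslin schemes of measurable sets are measurable\<close>

lemma (in finite_measure) exists_measurable_envelope:
  assumes "S \<subseteq> space M"
  shows "\<exists>H\<in>sets M. S \<subseteq> H \<and> (\<forall>G\<in>sets M. S \<subseteq> G \<longrightarrow> H - G \<in> null_sets M)"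
proof -
  let ?m = "INF G\<in>{G\<in>sets M. S \<subseteq> G}. measure M G"
  have bdd: "bdd_below (measure M ` {G\<in>sets M. S \<subseteq> G})"
    by (auto intro: bdd_belowI[of _ 0])
  have ne: "{G\<in>sets M. S \<subseteq> G} \<noteq> {}" using assms by auto
  have "\<exists>G. G \<in> sets M \<and> S \<subseteq> G \<and> measure M G < ?m + 1 / Suc n" for n :: nat
    using cInf_less_iff[of "measure M ` {G\<in>sets M. S \<subseteq> G}" "?m + 1 / Suc n"] ne bdd by auto
  then obtain G where G: "\<And>n. G n \<in> sets M" "\<And>n. S \<subseteq> G n" "\<And>n. measure M (G n) < ?m + 1 / Suc n"
    by metis
  define H where "H = (\<Inter>n. G n)"
  have H: "H \<in> sets M" "S \<subseteq> H" using G by (auto simp: H_def)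
  have "measure M H \<le> ?m"
  proof (rule field_le_epsilon)
    fix e :: real assume "0 < e"
    then obtain n :: nat where "1 / Suc n < e" using nat_approx_posE by blast
    moreover have "measure M H \<le> measure M (G n)"
      using G by (intro finite_measure_mono) (auto simp: H_def)
    ultimately show "measure M H \<le> ?m + e" using G(3)[of n] by linarith
  qed
  moreover have "?m \<le> measure M G'" if "G' \<in> sets M" "S \<subseteq> G'" for G'
    using that bdd by (intro cInf_lower) auto
  ultimately have minimal: "measure M H \<le> measure M G'" if "G' \<in> sets M" "S \<subseteq> G'" for G'
    using that by fastforce
  have "H - G' \<in> null_sets M" if G': "G' \<in> sets M" "S \<subseteq> G'" for G'
  proof -
    have "measure M H \<le> measure M (H \<inter> G')" using minimal G' H by auto
    then have "measure M (H - G') = 0"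
      using finite_measure_Diff'[of H G'] G' H measure_nonneg[of M "H - G'"] by auto
    then show "H - G' \<in> null_sets M" using G' H by (auto simp: emeasure_eq_measure null_sets_def)
  qed
  then show ?thesis using H by blast
qed

definition suslin_through :: "(nat list \<Rightarrow> 'a set) \<Rightarrow> nat list \<Rightarrow> 'a set" where
  "suslin_through C s = {x. \<exists>\<sigma>. map \<sigma> [0..<length s] = s \<and> (\<forall>n. x \<in> C (map \<sigma> [0..<Suc n]))}"

lemma suslin_through_Nil: "suslin_through C [] = suslin C"
  by (auto simp: suslin_through_def suslin_def)

lemma suslin_through_subset:
  assumes "s \<noteq> []"
  shows "suslin_through C s \<subseteq> C s"
proof
  fix x assume "x \<in> suslin_through C s"
  then obtain \<sigma> where "map \<sigma> [0..<length s] = s" "\<And>n. x \<in> C (map \<sigma> [0..<Suc n])"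
    unfolding suslin_through_def by blast
  moreover obtain n where "length s = Suc n" using assms by (cases s) auto
  ultimately show "x \<in> C s" by metis
qed

lemma suslin_through_subset_UN: "suslin_through C s \<subseteq> (\<Union>k. suslin_through C (s @ [k]))"
proof
  fix x assume "x \<in> suslin_through C s"
  then obtain \<sigma> where "map \<sigma> [0..<length s] = s" "\<And>n. x \<in> C (map \<sigma> [0..<Suc n])"
    unfolding suslin_through_def by blast
  then have "x \<in> suslin_through C (s @ [\<sigma> (length s)])"
    unfolding suslin_through_def by (intro CollectI exI[of _ \<sigma>]) auto
  then show "x \<in> (\<Union>k. suslin_through C (s @ [k]))" by blast
qed

lemma exists_branch:
  assumes "x \<in> H []" and "\<And>s. x \<in> H s \<Longrightarrow> \<exists>k. x \<in> H (s @ [k])"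
  shows "\<exists>\<sigma>. \<forall>n. x \<in> H (map \<sigma> [0..<n])"
proof -
  obtain f where f: "\<And>n. x \<in> H (f n) \<and> length (f n) = n" "\<And>n. \<exists>k. f (Suc n) = f n @ [k]"
  proof -
    have "\<exists>f. \<forall>n. (x \<in> H (f n) \<and> length (f n) = n) \<and> (\<exists>k. f (Suc n) = f n @ [k])"
    proof (rule dependent_nat_choice)
      show "\<exists>s. x \<in> H s \<and> length s = 0" using assms(1) by auto
      show "\<exists>s'. (x \<in> H s' \<and> length s' = Suc n) \<and> (\<exists>k. s' = s @ [k])"
        if "x \<in> H s \<and> length s = n" for s n
        using that assms(2)[of s] by auto
    qed
    then show ?thesis using that by blast
  qed
  have "f n = map (\<lambda>n. last (f (Suc n))) [0..<n]" for n
  proof (induction n)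
    case 0
    then show ?case using f(1)[of 0] by simp
  next
    case (Suc n)
    then show ?case using f(2)[of n] f(1)[of n] by (auto simp: last_conv_nth)
  qed
  then show ?thesis using f(1) by metis
qed

locale complete_finite_measure = finite_measure M + complete_measure M for M :: "'a measure"

text \<open>
  Let \<open>E s\<close> be a measurable envelope of \<open>suslin_through C s\<close> and \<open>H s = E s \<inter> C s\<close>.
  As \<open>suslin_through C s\<close> is covered by the measurable set \<open>\<Union>k. H (s @ [k])\<close>, the envelope
  exceeds this set only by a null set. Off the union \<open>N\<close> of these null sets every point of
  \<open>H []\<close> lies on an infinite branch of \<open>H\<close>, hence in \<open>suslin C\<close>.
\<close>
lemma (in complete_finite_measure) suslin_in_sets:
  assumes C: "\<And>s. s \<noteq> [] \<Longrightarrow> C s \<in> sets M"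
  shows "suslin C \<in> sets M"
proof -
  let ?R = "suslin_through C"
  have "?R s \<subseteq> space M" for s
    using suslin_through_subset_UN[of C s] suslin_through_subset[of "s @ [_]" C]
      C sets.sets_into_space by blast
  then have "\<exists>E\<in>sets M. ?R s \<subseteq> E \<and> (\<forall>G\<in>sets M. ?R s \<subseteq> G \<longrightarrow> E - G \<in> null_sets M)" for s
    by (intro exists_measurable_envelope)
  then obtain E where E: "\<And>s. E s \<in> sets M" "\<And>s. ?R s \<subseteq> E s"
    "\<And>s G. G \<in> sets M \<Longrightarrow> ?R s \<subseteq> G \<Longrightarrow> E s - G \<in> null_sets M"
    by metis
  define H where "H s = (if s = [] then E s else E s \<inter> C s)" for s
  have H: "H s \<in> sets M" "?R s \<subseteq> H s" "H s \<subseteq> E s" for s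
    using E C suslin_through_subset[of s C] by (auto simp: H_def)
  define N where "N = (\<Union>s. E s - (\<Union>k. H (s @ [k])))"
  have "N \<in> null_sets M"
  proof -
    have "?R s \<subseteq> (\<Union>k. H (s @ [k]))" for s
      using suslin_through_subset_UN[of C s] SUP_mono'[OF H(2)] by (rule order_trans)
    then show ?thesis unfolding N_def using H(1) by (intro null_sets_UN' countableI_type E(3)) auto
  qed
  moreover have "H [] - suslin C \<subseteq> N"
  proof
    fix x assume x: "x \<in> H [] - suslin C"
    show "x \<in> N"
    proof (rule ccontr)
      assume "x \<notin> N"
      then have "\<exists>k. x \<in> H (s @ [k])" if "x \<in> H s" for s
        using that H(3)[of s] by (auto simp: N_def)
      then obtain \<sigma> where "\<And>n. x \<in> H (map \<sigma> [0..<n])"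
        using exists_branch[of x H] x by blast
      then have "x \<in> H (map \<sigma> [0..<Suc n])" for n .
      then have "x \<in> C (map \<sigma> [0..<Suc n])" for n
        by (simp add: H_def del: upt_Suc)
      then show False using x by (auto simp: suslin_def)
    qed
  qed
  ultimately have diff: "H [] - suslin C \<in> sets M"
    using complete by blast
  have "suslin C \<subseteq> H []"
    using H(2)[of "[]"] by (simp only: suslin_through_Nil)
  then have "suslin C = H [] - (H [] - suslin C)" by blast
  also have "\<dots> \<in> sets M" using H(1) diff by (rule sets.Diff)
  finally show ?thesis .
qed

section \<open>The measurable projection theorem\<close>

definition suslin_compact_rects :: "'a measure \<Rightarrow> ('a \<times> 'b::topological_space) set set" where
  "suslin_compact_rects M =
    {suslin (\<lambda>s. A s \<times> K s) | A K. (\<forall>s. A s \<in> sets M) \<and> (\<forall>s. compact (K s))}"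

lemma suslin_compact_rectsI:
  "(\<And>s. A s \<in> sets M) \<Longrightarrow> (\<And>s. compact (K s)) \<Longrightarrow>
    suslin (\<lambda>s. A s \<times> K s) \<in> suslin_compact_rects M"
  unfolding suslin_compact_rects_def by blast

lemma Times_in_suslin_compact_rects:
  "A \<in> sets M \<Longrightarrow> compact K \<Longrightarrow> A \<times> K \<in> suslin_compact_rects M"
  using suslin_compact_rectsI[of "\<lambda>_. A" M "\<lambda>_. K"] by simp

lemma suslin_compact_rects_choice:
  assumes "\<And>i::nat. P i \<in> suslin_compact_rects M"
  obtains A K where "\<And>i. P i = suslin (\<lambda>s. A i s \<times> K i s)" "\<And>i s. A i s \<in> sets M"
    "\<And>i s. compact (K i s)"
proof -
  have "\<forall>i. \<exists>A K. P i = suslin (\<lambda>s. A s \<times> K s) \<and> (\<forall>s. A s \<in> sets M) \<and> (\<forall>s. compact (K s))"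
    using assms unfolding suslin_compact_rects_def by blast
  then show thesis using that unfolding choice_iff by blast
qed

lemma UN_in_suslin_compact_rects:
  assumes "\<And>i::nat. P i \<in> suslin_compact_rects M"
  shows "(\<Union>i. P i) \<in> suslin_compact_rects M"
proof -
  obtain A K where "\<And>i. P i = suslin (\<lambda>s. A i s \<times> K i s)" "\<And>i s. A i s \<in> sets M"
    "\<And>i s. compact (K i s)"
    using suslin_compact_rects_choice[of P M] assms by blast
  then show ?thesis by (simp add: suslin_UN suslin_compact_rectsI)
qed

lemma INT_in_suslin_compact_rects:
  assumes "\<And>i::nat. P i \<in> suslin_compact_rects M"
  shows "(\<Inter>i. P i) \<in> suslin_compact_rects M"
proof -
  obtain A K where "\<And>i. P i = suslin (\<lambda>s. A i s \<times> K i s)" "\<And>i s. A i s \<in> sets M"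
    "\<And>i s. compact (K i s)"
    using suslin_compact_rects_choice[of P M] assms by blast
  then show ?thesis by (simp add: suslin_INT case_prod_beta suslin_compact_rectsI)
qed

lemma Un_in_suslin_compact_rects:
  "P \<in> suslin_compact_rects M \<Longrightarrow> Q \<in> suslin_compact_rects M \<Longrightarrow>
    P \<union> Q \<in> suslin_compact_rects M"
  unfolding Un_range_binary by (intro UN_in_suslin_compact_rects) (simp add: binary_def)

lemma Times_open_in_suslin_compact_rects:
  fixes U :: "'b::euclidean_space set"
  assumes "A \<in> sets M" "open U"
  shows "A \<times> U \<in> suslin_compact_rects M"
proof -
  obtain K where K: "\<And>n::nat. compact (K n)" "(\<Union>n. K n) = U"
    using open_Union_compact_subsets[OF assms(2)] by metis
  then have "A \<times> U = (\<Union>n. A \<times> K n)" by blast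
  also have "\<dots> \<in> suslin_compact_rects M"
    using assms K by (intro UN_in_suslin_compact_rects Times_in_suslin_compact_rects)
  finally show ?thesis .
qed

lemma Times_closed_in_suslin_compact_rects:
  fixes F :: "'b::euclidean_space set"
  assumes "A \<in> sets M" "closed F"
  shows "A \<times> F \<in> suslin_compact_rects M"
proof -
  have "F = (\<Union>n::nat. F \<inter> cball 0 n)"
    by (auto simp: real_arch_simple)
  then have "A \<times> F = (\<Union>n::nat. A \<times> (F \<inter> cball 0 n))" by blast
  also have "\<dots> \<in> suslin_compact_rects M"
    using assms by (intro UN_in_suslin_compact_rects Times_in_suslin_compact_rects closed_Int_compact) auto
  finally show ?thesis .
qed

lemma sets_pair_borel_eq_sigma_sets_open:
  "sets (M \<Otimes>\<^sub>M (borel :: 'b::topological_space measure)) =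
    sigma_sets (space M \<times> UNIV) {a \<times> b | a b. a \<in> sets M \<and> open b}"
proof -
  have "sets (M \<Otimes>\<^sub>M (borel :: 'b measure)) = sets (sigma (space M) (sets M) \<Otimes>\<^sub>M sigma UNIV (Collect open))"
    by (intro sets_pair_measure_cong) (simp_all add: borel_def sets.sigma_sets_eq)
  also have "\<dots> = sets (sigma (space M \<times> UNIV) {a \<times> b | a b. a \<in> sets M \<and> b \<in> Collect open})"
    by (subst sigma_prod) (auto intro: exI[of _ "{space M}"] exI[of _ "{UNIV}"] dest: sets.sets_into_space)
  also have "\<dots> = sigma_sets (space M \<times> UNIV) {a \<times> b | a b. a \<in> sets M \<and> open b}"
    by (subst sets_measure_of) (auto dest: sets.sets_into_space)
  finally show ?thesis .
qed

text \<open>The class is closed under countable unions and intersections but not obviously under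
  complements, so the induction over the generated \<sigma>-algebra carries the complement along.\<close>

lemma sets_pair_borel_subset_suslin_compact_rects:
  fixes M :: "'a measure"
  shows "sets (M \<Otimes>\<^sub>M (borel :: 'b::euclidean_space measure)) \<subseteq> suslin_compact_rects M"
proof
  let ?\<Omega> = "space M \<times> (UNIV :: 'b set)"
  fix P :: "('a \<times> 'b) set" assume "P \<in> sets (M \<Otimes>\<^sub>M borel)"
  then have "P \<in> sigma_sets ?\<Omega> {a \<times> b | a b. a \<in> sets M \<and> open b}"
    by (simp only: sets_pair_borel_eq_sigma_sets_open)
  then have "P \<in> suslin_compact_rects M \<and> ?\<Omega> - P \<in> suslin_compact_rects M"
  proof (induction rule: sigma_sets.induct)
    case (Basic P)
    then obtain a b where P: "P = a \<times> b" "a \<in> sets M" "open b" by blast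
    then have "?\<Omega> - P = (space M - a) \<times> UNIV \<union> a \<times> (- b)"
      using sets.sets_into_space by blast
    moreover have "(space M - a) \<times> (UNIV :: 'b set) \<in> suslin_compact_rects M" "a \<times> (- b) \<in> suslin_compact_rects M"
      using P by (auto intro!: Times_open_in_suslin_compact_rects Times_closed_in_suslin_compact_rects)
    ultimately show ?case using P by (auto intro: Un_in_suslin_compact_rects Times_open_in_suslin_compact_rects)
  next
    case Empty
    then show ?case
      using Times_in_suslin_compact_rects[of "{}" M "{}"] Times_open_in_suslin_compact_rects[of "space M" M UNIV]
      by simp
  next
    case (Compl P)
    have "P \<subseteq> ?\<Omega>"
      using Compl.hyps by (rule sigma_sets_into_sp[rotated]) (auto dest: sets.sets_into_space)
    then have "?\<Omega> - (?\<Omega> - P) = P" by blast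
    then show ?case using Compl.IH by simp
  next
    case (Union P)
    have "?\<Omega> - (\<Union>i. P i) = (\<Inter>i. ?\<Omega> - P i)" by blast
    moreover have "(\<Inter>i. ?\<Omega> - P i) \<in> suslin_compact_rects M"
      using Union.IH by (intro INT_in_suslin_compact_rects) blast
    moreover have "(\<Union>i. P i) \<in> suslin_compact_rects M"
      using Union.IH by (intro UN_in_suslin_compact_rects) blast
    ultimately show ?case by simp
  qed
  then show "P \<in> suslin_compact_rects M" ..
qed

text \<open>Cantor's intersection theorem supplies the second coordinate of a point of the projection.\<close>

lemma fst_suslin_Times_compact:
  fixes K :: "nat list \<Rightarrow> 'b::heine_borel set"
  assumes compact: "\<And>s. s \<noteq> [] \<Longrightarrow> compact (K s)"
    and antimono: "\<And>s k. s \<noteq> [] \<Longrightarrow> K (s @ [k]) \<subseteq> K s"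
  shows "fst ` suslin (\<lambda>s. A s \<times> K s) = suslin (\<lambda>s. if K s = {} then {} else A s)"
proof (intro equalityI subsetI)
  fix x assume "x \<in> fst ` suslin (\<lambda>s. A s \<times> K s)"
  then obtain y where "(x, y) \<in> suslin (\<lambda>s. A s \<times> K s)" by (auto elim!: imageE)
  then obtain \<sigma> where "\<And>n. (x, y) \<in> A (map \<sigma> [0..<Suc n]) \<times> K (map \<sigma> [0..<Suc n])"
    unfolding suslin_def by blast
  then show "x \<in> suslin (\<lambda>s. if K s = {} then {} else A s)"
    unfolding suslin_def by (intro UN_I[of \<sigma>] INT_I) auto
next
  fix x assume "x \<in> suslin (\<lambda>s. if K s = {} then {} else A s)"
  then obtain \<sigma> where \<sigma>: "\<And>n. x \<in> (if K (map \<sigma> [0..<Suc n]) = {} then {} else A (map \<sigma> [0..<Suc n]))"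
    unfolding suslin_def by blast
  define F where "F n = K (map \<sigma> [0..<Suc n])" for n
  have F: "compact (F n)" "F n \<noteq> {}" "x \<in> A (map \<sigma> [0..<Suc n])" for n
    using \<sigma>[of n] compact by (auto simp: F_def split: if_splits)
  have "F (Suc n) \<subseteq> F n" for n
    using antimono[of "map \<sigma> [0..<Suc n]" "\<sigma> (Suc n)"] by (simp add: F_def)
  then have "F n \<subseteq> F m" if "m \<le> n" for m n
    using that by (rule lift_Suc_antimono_le)
  then obtain y where y: "\<And>n. y \<in> F n"
    using compact_nest[of F, OF F(1,2)] by blast
  have "(x, y) \<in> suslin (\<lambda>s. A s \<times> K s)"
    unfolding suslin_def using F(3) y[unfolded F_def] by (intro UN_I[of \<sigma>] UNIV_I INT_I SigmaI)
  then show "x \<in> fst ` suslin (\<lambda>s. A s \<times> K s)" by (rule rev_image_eqI) simp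
qed

lemma INT_Times_distrib: "(\<Inter>i\<in>I. A i \<times> B i) = (\<Inter>i\<in>I. A i) \<times> (\<Inter>i\<in>I. B i)"
  by auto

lemma fst_image_suslin_compact_rects:
  fixes P :: "('a \<times> 'b::heine_borel) set"
  assumes "P \<in> suslin_compact_rects M"
  obtains C where "\<And>s. s \<noteq> [] \<Longrightarrow> C s \<in> sets M" "fst ` P = suslin C"
proof -
  obtain A K where P: "P = suslin (\<lambda>s. A s \<times> K s)" and A: "\<And>s. A s \<in> sets M" and K: "\<And>s. compact (K s)"
    using assms unfolding suslin_compact_rects_def by blast
  define A' where "A' s = (\<Inter>k\<in>{1..length s}. A (take k s))" for s
  define K' where "K' s = (\<Inter>k\<in>{1..length s}. K (take k s))" for s
  have "P = suslin (\<lambda>s. A' s \<times> K' s)"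
    unfolding P A'_def K'_def by (subst suslin_prefix_INT) (simp only: INT_Times_distrib)
  moreover have "fst ` suslin (\<lambda>s. A' s \<times> K' s) = suslin (\<lambda>s. if K' s = {} then {} else A' s)"
  proof (rule fst_suslin_Times_compact)
    show "compact (K' s)" if "s \<noteq> []" for s
      unfolding K'_def using that K by (intro compact_Inter) (auto simp: Suc_le_eq)
    show "K' (s @ [k]) \<subseteq> K' s" for s k
    proof (unfold K'_def, intro INT_greatest)
      fix j assume "j \<in> {1..length s}"
      then have "j \<in> {1..length (s @ [k])}" "take j (s @ [k]) = take j s" by auto
      then show "(\<Inter>j\<in>{1..length (s @ [k])}. K (take j (s @ [k]))) \<subseteq> K (take j s)"
        by (metis INF_lower)
    qed
  qed
  moreover have "A' s \<in> sets M" if "s \<noteq> []" for s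
    unfolding A'_def using that A by (intro sets.finite_INT) (auto simp: Suc_le_eq)
  ultimately show ?thesis
    using that[of "\<lambda>s. if K' s = {} then {} else A' s"] by simp
qed

lemma (in complete_finite_measure) fst_image_in_sets:
  assumes "P \<in> sets (M \<Otimes>\<^sub>M (borel :: 'b::euclidean_space measure))"
  shows "fst ` P \<in> sets M"
proof -
  obtain C where "\<And>s. s \<noteq> [] \<Longrightarrow> C s \<in> sets M" "fst ` P = suslin C"
    using fst_image_suslin_compact_rects sets_pair_borel_subset_suslin_compact_rects assms by blast
  then show ?thesis using suslin_in_sets by simp
qed

section \<open>Debuts\<close>

definition debut :: "('a \<times> real) set \<Rightarrow> 'a \<Rightarrow> real \<Rightarrow> ereal" where
  "debut Q \<omega> t = Inf (ereal ` {u. (\<omega>, u) \<in> Q \<and> t \<le> u})"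

lemma debut_less_iff: "debut Q \<omega> t < c \<longleftrightarrow> (\<exists>u. (\<omega>, u) \<in> Q \<and> t \<le> u \<and> ereal u < c)"
  by (auto simp: debut_def Inf_less_iff)

lemma le_debut_iff: "ereal u \<le> debut Q \<omega> t \<longleftrightarrow> (\<forall>s\<in>{t..<u}. (\<omega>, s) \<notin> Q)"
  by (auto simp: debut_def le_Inf_iff not_le)

lemma (in complete_finite_measure) measurable_debut:
  assumes "Q \<in> sets (M \<Otimes>\<^sub>M borel)"
  shows "(\<lambda>\<omega>. debut Q \<omega> t) \<in> borel_measurable M"
proof (rule borel_measurableI_less)
  fix c :: ereal
  have "{\<omega> \<in> space M. debut Q \<omega> t < c} = fst ` (Q \<inter> space M \<times> {u. t \<le> u \<and> ereal u < c})"
    using sets.sets_into_space[OF assms] by (force simp: debut_less_iff space_pair_measure)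
  also have "\<dots> \<in> sets M"
  proof -
    have "{u. t \<le> u \<and> ereal u < c} \<in> sets borel" by measurable
    then show ?thesis using assms by (intro fst_image_in_sets sets.Int pair_measureI) auto
  qed
  finally show "{\<omega> \<in> space M. debut Q \<omega> t < c} \<in> sets M" .
qed

text \<open>A point of the section in the window is found by starting the debut at rational times.\<close>

lemma (in complete_finite_measure) sets_exists_section_between:
  assumes "Q \<in> sets (M \<Otimes>\<^sub>M borel)" and [measurable]: "g \<in> measurable N M"
    "\<alpha> \<in> borel_measurable N" "\<beta> \<in> borel_measurable N"
  shows "{x \<in> space N. \<exists>u. (g x, u) \<in> Q \<and> \<alpha> x < ereal u \<and> ereal u < \<beta> x} \<in> sets N"
proof -
  have [measurable]: "(\<lambda>\<omega>. debut Q \<omega> t) \<in> borel_measurable M" for t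
    using assms(1) by (rule measurable_debut)
  have "{x \<in> space N. \<exists>u. (g x, u) \<in> Q \<and> \<alpha> x < ereal u \<and> ereal u < \<beta> x} =
      (\<Union>q::rat. {x \<in> space N. \<alpha> x < real_of_rat q \<and> debut Q (g x) (real_of_rat q) < \<beta> x})"
  proof (intro equalityI subsetI)
    fix x assume "x \<in> {x \<in> space N. \<exists>u. (g x, u) \<in> Q \<and> \<alpha> x < ereal u \<and> ereal u < \<beta> x}"
    then obtain u where x: "x \<in> space N" "(g x, u) \<in> Q" "\<alpha> x < ereal u" "ereal u < \<beta> x" by blast
    then obtain q :: rat where q: "\<alpha> x < real_of_rat q" "real_of_rat q < ereal u"
      using ereal_dense3 by blast
    then have "debut Q (g x) (real_of_rat q) < \<beta> x"
      using x by (auto simp: debut_less_iff intro!: exI[of _ u])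
    then show "x \<in> (\<Union>q::rat. {x \<in> space N. \<alpha> x < real_of_rat q \<and> debut Q (g x) (real_of_rat q) < \<beta> x})"
      using x q by blast
  next
    fix x assume "x \<in> (\<Union>q::rat. {x \<in> space N. \<alpha> x < real_of_rat q \<and> debut Q (g x) (real_of_rat q) < \<beta> x})"
    then obtain q :: rat where x: "x \<in> space N" "\<alpha> x < real_of_rat q" "debut Q (g x) (real_of_rat q) < \<beta> x"
      by blast
    then obtain u where "(g x, u) \<in> Q" "real_of_rat q \<le> u" "ereal u < \<beta> x"
      by (auto simp: debut_less_iff)
    moreover have "\<alpha> x < ereal u" using x(2) \<open>real_of_rat q \<le> u\<close> by (simp add: less_le_trans)
    ultimately show "x \<in> {x \<in> space N. \<exists>u. (g x, u) \<in> Q \<and> \<alpha> x < ereal u \<and> ereal u < \<beta> x}"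
      using x(1) by blast
  qed
  also have "\<dots> \<in> sets N" by measurable
  finally show ?thesis .
qed

lemma (in complete_finite_measure) measurable_debut_pair:
  fixes Q :: "('a \<times> real) set"
  assumes "Q \<in> sets (M \<Otimes>\<^sub>M borel)"
  shows "(\<lambda>x. debut Q (fst x) (snd x)) \<in> borel_measurable (M \<Otimes>\<^sub>M borel)"
proof (rule borel_measurableI_less)
  let ?MB = "M \<Otimes>\<^sub>M (borel :: real measure)"
  fix c :: ereal
  have "{x \<in> space ?MB. debut Q (fst x) (snd x) < c} =
      (Q \<inter> {x \<in> space ?MB. ereal (snd x) < c}) \<union>
      {x \<in> space ?MB. \<exists>u. (fst x, u) \<in> Q \<and> ereal (snd x) < ereal u \<and> ereal u < c}"
  proof (intro equalityI subsetI)
    fix x assume "x \<in> {x \<in> space ?MB. debut Q (fst x) (snd x) < c}"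
    then obtain u where x: "x \<in> space ?MB" "(fst x, u) \<in> Q" "snd x \<le> u" "ereal u < c"
      by (auto simp: debut_less_iff)
    show "x \<in> (Q \<inter> {x \<in> space ?MB. ereal (snd x) < c}) \<union>
        {x \<in> space ?MB. \<exists>u. (fst x, u) \<in> Q \<and> ereal (snd x) < ereal u \<and> ereal u < c}"
    proof (cases "u = snd x")
      case True
      then show ?thesis using x by simp
    next
      case False
      then show ?thesis using x by auto
    qed
  next
    fix x assume "x \<in> (Q \<inter> {x \<in> space ?MB. ereal (snd x) < c}) \<union>
        {x \<in> space ?MB. \<exists>u. (fst x, u) \<in> Q \<and> ereal (snd x) < ereal u \<and> ereal u < c}"
    then show "x \<in> {x \<in> space ?MB. debut Q (fst x) (snd x) < c}"
      by (auto simp: debut_less_iff intro: exI[of _ "snd x"])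
  qed
  also have "\<dots> \<in> sets ?MB"
    using assms by (intro sets.Un sets.Int sets_exists_section_between) auto
  finally show "{x \<in> space ?MB. debut Q (fst x) (snd x) < c} \<in> sets ?MB" .
qed

section \<open>The until operator\<close>

definition until_set :: "('a \<times> real) set \<Rightarrow> ('a \<times> real) set \<Rightarrow> real set \<Rightarrow> ('a \<times> real) set" where
  "until_set P Q S = {(\<omega>, t). \<exists>s\<in>S. (\<omega>, t + s) \<in> Q \<and> (\<forall>s'\<in>{t..<t + s}. (\<omega>, s') \<in> P)}"

lemma until_set_Union: "until_set P Q (\<Union>\<S>) = (\<Union>S\<in>\<S>. until_set P Q S)"
  by (auto simp: until_set_def)

text \<open>The debut of the complement of \<open>P\<close> is the exit time from \<open>P\<close>.\<close>

lemma until_set_eq_debut: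
  assumes "Q \<in> sets (M \<Otimes>\<^sub>M borel)"
  shows "until_set P Q S = {x \<in> space (M \<Otimes>\<^sub>M borel). \<exists>s\<in>S. (fst x, snd x + s) \<in> Q \<and>
    ereal (snd x + s) \<le> debut (space M \<times> UNIV - P) (fst x) (snd x)}"
  using sets.sets_into_space[OF assms] by (fastforce simp: until_set_def le_debut_iff space_pair_measure)

lemma (in complete_finite_measure) until_set_singleton_in_sets:
  assumes [measurable]: "P \<in> sets (M \<Otimes>\<^sub>M borel)" "Q \<in> sets (M \<Otimes>\<^sub>M borel)"
  shows "until_set P Q {c} \<in> sets (M \<Otimes>\<^sub>M borel)"
proof -
  have [measurable]: "(\<lambda>x. debut (space M \<times> UNIV - P) (fst x) (snd x)) \<in> borel_measurable (M \<Otimes>\<^sub>M borel)"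
    by (intro measurable_debut_pair) measurable
  show ?thesis unfolding until_set_eq_debut[OF assms(2)] by measurable
qed

text \<open>A hit strictly before the exit time \<open>e\<close> lies in an open window, which the debut detects;
  a hit at \<open>e\<close> itself has to be tested separately.\<close>

lemma ex_greaterThanLessThan_le_iff:
  fixes e :: ereal
  shows "(\<exists>s\<in>{a<..<b}. G (t + s) \<and> ereal (t + s) \<le> e) \<longleftrightarrow>
    (\<exists>u. G u \<and> ereal (t + a) < ereal u \<and> ereal u < min (ereal (t + b)) e) \<or>
    (e \<noteq> \<infinity> \<and> G (real_of_ereal e) \<and> ereal (t + a) < e \<and> e < ereal (t + b))"
proof
  assume "\<exists>s\<in>{a<..<b}. G (t + s) \<and> ereal (t + s) \<le> e"
  then obtain s where s: "a < s" "s < b" "G (t + s)" "ereal (t + s) \<le> e" by auto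
  show "(\<exists>u. G u \<and> ereal (t + a) < ereal u \<and> ereal u < min (ereal (t + b)) e) \<or>
    (e \<noteq> \<infinity> \<and> G (real_of_ereal e) \<and> ereal (t + a) < e \<and> e < ereal (t + b))"
  proof (cases "ereal (t + s) < e")
    case True
    then show ?thesis using s by (auto intro!: exI[of _ "t + s"])
  next
    case False
    then have "e = ereal (t + s)" using s(4) by simp
    then show ?thesis using s by simp
  qed
next
  assume "(\<exists>u. G u \<and> ereal (t + a) < ereal u \<and> ereal u < min (ereal (t + b)) e) \<or>
    (e \<noteq> \<infinity> \<and> G (real_of_ereal e) \<and> ereal (t + a) < e \<and> e < ereal (t + b))"
  then show "\<exists>s\<in>{a<..<b}. G (t + s) \<and> ereal (t + s) \<le> e"
  proof (elim disjE exE conjE)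
    fix u assume "G u" "ereal (t + a) < ereal u" "ereal u < min (ereal (t + b)) e"
    then show ?thesis by (intro bexI[of _ "u - t"]) auto
  next
    assume "e \<noteq> \<infinity>" "G (real_of_ereal e)" "ereal (t + a) < e" "e < ereal (t + b)"
    then show ?thesis by (cases e) (auto intro!: bexI[of _ "real_of_ereal e - t"])
  qed
qed

lemma (in complete_finite_measure) until_set_greaterThanLessThan_in_sets:
  assumes [measurable]: "P \<in> sets (M \<Otimes>\<^sub>M borel)" "Q \<in> sets (M \<Otimes>\<^sub>M borel)"
  shows "until_set P Q {a<..<b} \<in> sets (M \<Otimes>\<^sub>M borel)"
proof -
  let ?MB = "M \<Otimes>\<^sub>M (borel :: real measure)"
  define E where "E x = debut (space M \<times> UNIV - P) (fst x) (snd x)" for x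
  have [measurable]: "E \<in> borel_measurable ?MB"
    unfolding E_def by (intro measurable_debut_pair) measurable
  have "until_set P Q {a<..<b} =
      {x \<in> space ?MB. \<exists>u. (fst x, u) \<in> Q \<and> ereal (snd x + a) < ereal u \<and>
        ereal u < min (ereal (snd x + b)) (E x)} \<union>
      {x \<in> space ?MB. E x \<noteq> \<infinity> \<and> (fst x, real_of_ereal (E x)) \<in> Q \<and>
        ereal (snd x + a) < E x \<and> E x < ereal (snd x + b)}"
    unfolding until_set_eq_debut[OF assms(2)] E_def[symmetric]
    using ex_greaterThanLessThan_le_iff[where G = "\<lambda>u. (fst _, u) \<in> Q"] by blast
  also have "\<dots> \<in> sets ?MB"
    by (intro sets.Un sets_exists_section_between) measurable
  finally show ?thesis .
qed

lemma (in complete_finite_measure) until_set_open_in_sets: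
  assumes "P \<in> sets (M \<Otimes>\<^sub>M borel)" "Q \<in> sets (M \<Otimes>\<^sub>M borel)" "open U"
  shows "until_set P Q U \<in> sets (M \<Otimes>\<^sub>M borel)"
proof -
  obtain \<D> where \<D>: "countable \<D>" "\<D> \<subseteq> Pow U" "\<And>D. D \<in> \<D> \<Longrightarrow> \<exists>a b. D = box a b" "\<Union>\<D> = U"
    by (rule open_countable_Union_open_box[OF assms(3)]) blast
  have "until_set P Q U = (\<Union>D\<in>\<D>. until_set P Q D)"
    unfolding \<D>(4)[symmetric] by (rule until_set_Union)
  also have "\<dots> \<in> sets (M \<Otimes>\<^sub>M borel)"
    using \<D>(1,3) assms(1,2)
    by (intro sets.countable_UN') (auto simp: box_real intro: until_set_greaterThanLessThan_in_sets)
  finally show ?thesis .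
qed

lemma (in complete_finite_measure) until_set_in_sets:
  assumes "P \<in> sets (M \<Otimes>\<^sub>M borel)" "Q \<in> sets (M \<Otimes>\<^sub>M borel)" "countable (S - interior S)"
  shows "until_set P Q S \<in> sets (M \<Otimes>\<^sub>M borel)"
proof -
  have "S = \<Union>(insert (interior S) ((\<lambda>c. {c}) ` (S - interior S)))"
    using interior_subset by blast
  then have "until_set P Q S = until_set P Q (\<Union>(insert (interior S) ((\<lambda>c. {c}) ` (S - interior S))))"
    by (rule arg_cong)
  also have "\<dots> = (\<Union>D\<in>insert (interior S) ((\<lambda>c. {c}) ` (S - interior S)). until_set P Q D)"
    by (rule until_set_Union)
  also have "\<dots> = until_set P Q (interior S) \<union> (\<Union>c\<in>S - interior S. until_set P Q {c})"
    by simp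
  also have "\<dots> \<in> sets (M \<Otimes>\<^sub>M borel)"
    using assms until_set_singleton_in_sets by (intro sets.Un sets.countable_UN' until_set_open_in_sets) auto
  finally show ?thesis .
qed

lemma is_interval_diff_interior_subset:
  fixes S :: "real set"
  assumes "is_interval S"
  shows "S - interior S \<subseteq> {Inf S, Sup S}"
proof
  fix x assume "x \<in> S - interior S"
  then have x: "x \<in> S" "x \<notin> interior S" by auto
  show "x \<in> {Inf S, Sup S}"
  proof (rule ccontr)
    assume "x \<notin> {Inf S, Sup S}"
    then have x_ends: "x \<noteq> Inf S" "x \<noteq> Sup S" by auto
    have "\<exists>y\<in>S. y < x"
    proof (cases "bdd_below S")
      case True
      then have "Inf S < x" using x(1) x_ends(1) cInf_lower[of x S] by linarith
      then show ?thesis using x(1) True cInf_less_iff[of S x] by auto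
    next
      case False
      then show ?thesis by (auto simp: bdd_below_def not_le)
    qed
    then obtain y where "y \<in> S" "y < x" by blast
    have "\<exists>z\<in>S. x < z"
    proof (cases "bdd_above S")
      case True
      then have "x < Sup S" using x(1) x_ends(2) cSup_upper[of x S] by linarith
      then show ?thesis using x(1) True less_cSup_iff[of S x] by auto
    next
      case False
      then show ?thesis by (auto simp: bdd_above_def not_le)
    qed
    then obtain z where "z \<in> S" "x < z" by blast
    have yz: "{y<..<z} \<subseteq> S"
      using mem_is_interval_1_I[OF assms \<open>y \<in> S\<close> \<open>z \<in> S\<close>] by fastforce
    then have "x \<in> interior S"
      using \<open>y < x\<close> \<open>x < z\<close> by (intro interiorI[OF open_greaterThanLessThan _ yz]) simp
    then show False using x(2) by blast
  qed
qed

lemma denot_Until: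
  assumes "I \<subseteq> {0..}"
  shows "denot M X B (Until \<phi>1 I \<phi>2) =
    until_set (denot M X B \<phi>1) (denot M X B \<phi>2) I \<inter> space M \<times> {0..}"
proof -
  have "(\<omega>, t) \<in> denot M X B (Until \<phi>1 I \<phi>2) \<longleftrightarrow>
      (\<omega>, t) \<in> until_set (denot M X B \<phi>1) (denot M X B \<phi>2) I \<inter> space M \<times> {0..}" for \<omega> t
  proof (cases "\<omega> \<in> space M \<and> 0 \<le> t")
    case True
    have "(\<omega>, t + s) \<in> denot M X B \<phi>2 \<longleftrightarrow> sat X B \<omega> (t + s) \<phi>2" if "s \<in> I" for s
      using True that assms by (auto simp: denot_def)
    moreover have "(\<omega>, s') \<in> denot M X B \<phi>1 \<longleftrightarrow> sat X B \<omega> s' \<phi>1" if "t \<le> s'" for s'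
      using True that by (auto simp: denot_def)
    ultimately show ?thesis
      using True by (auto simp: until_set_def denot_def[of M X B "Until \<phi>1 I \<phi>2"])
  next
    case False
    then show ?thesis by (auto simp: denot_def)
  qed
  then show ?thesis by (simp add: set_eq_iff split_paired_all)
qed

lemma sets_pair_restrict_space_iff:
  assumes "\<Omega> \<in> sets N"
  shows "A \<in> sets (M \<Otimes>\<^sub>M restrict_space N \<Omega>) \<longleftrightarrow> A \<in> sets (M \<Otimes>\<^sub>M N) \<and> A \<subseteq> space M \<times> \<Omega>"
proof -
  let ?L = "M \<Otimes>\<^sub>M restrict_space N \<Omega>" and ?R = "restrict_space (M \<Otimes>\<^sub>M N) (space M \<times> \<Omega>)"
  have space: "space ?L = space M \<times> \<Omega>" "space ?R = space M \<times> \<Omega>"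
    using sets.sets_into_space[OF assms] by (auto simp: space_restrict_space space_pair_measure)
  have L_to_pair: "(\<lambda>x. x) \<in> measurable ?L (M \<Otimes>\<^sub>M N)"
  proof (rule measurable_pair)
    have "(\<lambda>x. x) \<in> measurable (restrict_space N \<Omega>) N" by (rule measurable_restrict_space1) simp
    then show "snd \<circ> (\<lambda>x. x) \<in> measurable ?L N"
      using measurable_compose[OF measurable_snd] by (simp add: comp_def)
  qed simp
  have R_to_L: "(\<lambda>x. x) \<in> measurable ?R ?L"
    by (intro measurable_pair measurable_restrict_space1 measurable_restrict_space2)
       (auto simp: space_restrict_space space_pair_measure)
  show ?thesis
  proof
    assume A: "A \<in> sets ?L"
    then have "A \<subseteq> space M \<times> \<Omega>" using sets.sets_into_space space(1) by blast
    moreover have "A \<in> sets ?R"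
      using measurable_sets[OF R_to_L A] \<open>A \<subseteq> space M \<times> \<Omega>\<close> space(2) by (simp add: Int_absorb2)
    ultimately show "A \<in> sets (M \<Otimes>\<^sub>M N) \<and> A \<subseteq> space M \<times> \<Omega>"
      using assms by (simp add: sets_restrict_space_iff)
  next
    assume "A \<in> sets (M \<Otimes>\<^sub>M N) \<and> A \<subseteq> space M \<times> \<Omega>"
    then show "A \<in> sets ?L"
      using measurable_sets[OF L_to_pair, of A] space(1) by (simp add: Int_absorb2)
  qed
qed

lemma sets_prod_time_iff: "A \<in> sets (prod_time M) \<longleftrightarrow> A \<in> sets (M \<Otimes>\<^sub>M borel) \<and> A \<subseteq> space M \<times> {0..}"
  unfolding prod_time_def by (rule sets_pair_restrict_space_iff) simp

theorem lemma4p6: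
  fixes M :: "'w measure"
    and X :: "real \<Rightarrow> 'w \<Rightarrow> 'e::polish_space"
    and B :: "'ap \<Rightarrow> 'e set"
    and \<phi>1 \<phi>2 :: "'ap mtl"
    and I :: "real set"
  assumes "prob_space M"
    and "complete_measure M"
    and "\<And>t. 0 \<le> t \<Longrightarrow> X t \<in> borel_measurable M"
    and "\<And>a. B a \<in> sets borel"
    and "wf_mtl \<phi>1" and "wf_mtl \<phi>2"
    and "denot M X B \<phi>1 \<in> sets (prod_time M)"
    and "denot M X B \<phi>2 \<in> sets (prod_time M)"
    and "time_interval I"
  shows "denot M X B (Until \<phi>1 I \<phi>2) \<in> sets (prod_time M)"
proof -
  interpret complete_finite_measure M
    using assms(1,2) by (simp add: complete_finite_measure_def prob_space.finite_measure)
  have I: "is_interval I" "I \<subseteq> {0..}" using assms(9) by (auto simp: time_interval_def)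
  have "countable (I - interior I)"
    using is_interval_diff_interior_subset[OF I(1)] by (rule countable_subset) simp
  then have "until_set (denot M X B \<phi>1) (denot M X B \<phi>2) I \<in> sets (M \<Otimes>\<^sub>M borel)"
    using assms(7,8) by (intro until_set_in_sets) (auto simp: sets_prod_time_iff)
  then show ?thesis
    unfolding denot_Until[OF I(2)] sets_prod_time_iff by auto
qed

end
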